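(* Let $l\in\{1,\dots,n-1\}$. For $I\subseteq[1,n-1]$ set $\alpha(I)=c_{I\cap[1,l-1]}\,c_{[l,n-1]\setminus(I\cap[l,n-1])}\,\sigma_{[l,n]}\,a_l$. Then $\ell(t\alpha(I))>\ell(\alpha(I))$ if and only if $[1,l-1]\subsetneq I$.
   Context: $W_n$ is the Weyl group of type $B_n$ with Coxeter generators $t,s_1,\dots,s_{n-1}$ ($(ts_1)^4=1$, $(s_is_{i+1})^3=1$, other distinct pairs commute), $\ell$ its length function. $[i,j]=\{i,i+1,\dots,j\}$ (empty if $j<i$). Set $r_1=t$, $r_{i+1}=s_ir_i$, $a_l=r_1\cdots r_l$. For $1\le i\le j\le n$, $\sigma_{[i,j]}$ is the longest element of the subgroup generated by $s_i,\dots,s_{j-1}$. For $J=\{j_1<\dots<j_k\}\subseteq[1,n-1]$, $c_J=s_{j_1}s_{j_2}\cdots s_{j_k}$ ($c_\varnothing=1$). *)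

theory Defs
  imports Main
begin

text \<open>Concrete model of the Weyl group W_n of type B_n: signed permutations of
  {-n..-1,1..n}, realised as maps int => int, with group product = composition
  (x * y = x o y).  These satisfy exactly the
  Coxeter relations of type B_n, and the resulting group is the Coxeter group W_n.\<close>

definition tB :: "int \<Rightarrow> int" where
  "tB x = (if x = 1 then -1 else if x = -1 then 1 else x)"

definition sB :: "nat \<Rightarrow> int \<Rightarrow> int" where
  "sB i x = (if x = int i then int i + 1 else if x = int i + 1 then int i
             else if x = - int i then - int i - 1 else if x = - int i - 1 then - int i
             else x)"

definition gen :: "nat \<Rightarrow> int \<Rightarrow> int" where
  "gen k = (if k = 0 then tB else sB k)"

definition evalw :: "nat list \<Rightarrow> int \<Rightarrow> int" where
  "evalw ws = foldr (\<lambda>k f. gen k \<circ> f) ws id"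

definition WB :: "nat \<Rightarrow> (int \<Rightarrow> int) set" where
  "WB n = {evalw ws | ws. set ws \<subseteq> {0..<n}}"

definition lenB :: "nat \<Rightarrow> (int \<Rightarrow> int) \<Rightarrow> nat" where
  "lenB n w = (LEAST k. \<exists>ws. length ws = k \<and> set ws \<subseteq> {0..<n} \<and> evalw ws = w)"

fun rB :: "nat \<Rightarrow> int \<Rightarrow> int" where
  "rB 0 = id"
| "rB (Suc 0) = tB"
| "rB (Suc (Suc i)) = sB (Suc i) \<circ> rB (Suc i)"

fun aB :: "nat \<Rightarrow> int \<Rightarrow> int" where
  "aB 0 = id"
| "aB (Suc l) = aB l \<circ> rB (Suc l)"

definition parB :: "nat \<Rightarrow> nat \<Rightarrow> (int \<Rightarrow> int) set" where
  "parB i j = {evalw ws | ws. set ws \<subseteq> {i..<j}}"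

definition sigmaB :: "nat \<Rightarrow> nat \<Rightarrow> nat \<Rightarrow> int \<Rightarrow> int" where
  "sigmaB n i j = (SOME w. w \<in> parB i j \<and> (\<forall>v \<in> parB i j. lenB n v \<le> lenB n w))"

definition cB :: "nat set \<Rightarrow> int \<Rightarrow> int" where
  "cB J = evalw (sorted_list_of_set J)"

definition alphaB :: "nat \<Rightarrow> nat \<Rightarrow> nat set \<Rightarrow> int \<Rightarrow> int" where
  "alphaB n l I = cB (I \<inter> {1..l-1}) \<circ> cB ({l..n-1} - (I \<inter> {l..n-1}))
                  \<circ> sigmaB n l n \<circ> aB l"

end

(*
  W_n acts faithfully on {\<plusminus>1, ..., \<plusminus>n} by signed permutations. Its length function counts
  inversions, i.e. positive roots of B_n sent to negative roots: right multiplication by a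
  generator permutes the positive roots other than its simple root and negates that one, and
  an element without descents is the identity. Since t negates no root except \<plusminus>e_1,
  l(t w) > l(w) holds iff w^-1(1) > 0.

  For w = alpha(I) this preimage is computed factor by factor: a_l sends m \<in> [1,l] to
  m - l - 1, sigma_[l,n] fixes [1,l-1] and reverses [l,n] (a longest element has no ascent
  there), and c_J sends m \<notin> J to the bottom a of a run [a,m) \<subseteq> J. If m is the least element
  of [1,l-1] missing from I, the preimage is m - l - 1 < 0; otherwise it is n + l - q > 0 for
  the least q \<ge> l in I, and -1 if there is no such q, that is, if I = [1,l-1].
*)

theory Submission
  imports Defs
begin

section \<open>Signed permutations\<close>

lemma evalw_Nil [simp]: "evalw [] = id"
  by (simp add: evalw_def)

lemma evalw_Cons [simp]: "evalw (k # ws) = gen k \<circ> evalw ws"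
  by (simp add: evalw_def)

lemma evalw_append: "evalw (xs @ ys) = evalw xs \<circ> evalw ys"
  by (induction xs) (auto simp: comp_assoc)

lemma gen_gen [simp]: "gen k (gen k x) = x"
  by (auto simp: gen_def tB_def sB_def)

lemma gen_comp_gen [simp]: "gen k \<circ> gen k = id"
  by (simp add: fun_eq_iff)

definition signed_interval :: "nat \<Rightarrow> int set" where
  "signed_interval n = {x. x \<noteq> 0 \<and> \<bar>x\<bar> \<le> int n}"

definition signed_perm :: "nat \<Rightarrow> (int \<Rightarrow> int) \<Rightarrow> bool" where
  "signed_perm n w \<longleftrightarrow>
     (\<forall>x. w (-x) = - w x) \<and> (\<forall>x. x \<notin> signed_interval n \<longrightarrow> w x = x) \<and> inj w"

lemma finite_signed_interval: "finite (signed_interval n)"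
  by (rule finite_subset[of _ "{-int n..int n}"]) (auto simp: signed_interval_def)

lemma signed_perm_id: "signed_perm n id"
  by (simp add: signed_perm_def)

lemma signed_perm_comp: "signed_perm n f \<Longrightarrow> signed_perm n g \<Longrightarrow> signed_perm n (f \<circ> g)"
  by (auto simp: signed_perm_def inj_compose)

lemma signed_perm_gen: "k < n \<Longrightarrow> signed_perm n (gen k)"
  by (auto simp: signed_perm_def signed_interval_def gen_def tB_def sB_def
           intro: inj_on_inverseI[where g = "gen k"])

lemma signed_perm_evalw: "set ws \<subseteq> {0..<n} \<Longrightarrow> signed_perm n (evalw ws)"
  by (induction ws) (auto simp: signed_perm_id signed_perm_comp signed_perm_gen)

context
  fixes n :: nat and w :: "int \<Rightarrow> int"
  assumes w: "signed_perm n w"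
begin

lemma signed_perm_uminus: "w (-x) = - w x"
  using w by (simp add: signed_perm_def)

lemma signed_perm_eq_iff: "w x = w y \<longleftrightarrow> x = y"
  using w by (auto simp: signed_perm_def inj_eq)

lemma signed_perm_outside: "x \<notin> signed_interval n \<Longrightarrow> w x = x"
  using w by (simp add: signed_perm_def)

lemma signed_perm_image_eq_iff: "w ` S = w ` T \<longleftrightarrow> S = T"
  using w by (simp add: signed_perm_def inj_image_eq_iff)

lemma signed_perm_zero: "w 0 = 0"
  using signed_perm_uminus[of 0] by simp

lemma signed_perm_in_signed_interval: "x \<in> signed_interval n \<Longrightarrow> w x \<in> signed_interval n"
  by (metis signed_perm_outside signed_perm_eq_iff)

lemma signed_perm_abs_eq_iff: "\<bar>w x\<bar> = \<bar>w y\<bar> \<longleftrightarrow> \<bar>x\<bar> = \<bar>y\<bar>"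
  by (metis abs_eq_iff signed_perm_eq_iff signed_perm_uminus)

end

section \<open>Roots and inversions\<close>

text \<open>A root sgn u e_|u| or sgn u e_|u| + sgn v e_|v| of type B_n is encoded by the set {u} or
  {u, v}; it is positive iff its coordinate of largest index is positive, and a signed
  permutation acts on roots by taking images.\<close>

definition roots :: "nat \<Rightarrow> int set set" where
  "roots n = {S. (\<exists>u\<in>signed_interval n. S = {u}) \<or>
     (\<exists>u\<in>signed_interval n. \<exists>v\<in>signed_interval n. \<bar>u\<bar> \<noteq> \<bar>v\<bar> \<and> S = {u, v})}"

definition positive_root :: "int set \<Rightarrow> bool" where
  "positive_root S \<longleftrightarrow> (\<exists>u\<in>S. 0 < u \<and> (\<forall>v\<in>S. \<bar>v\<bar> \<le> \<bar>u\<bar>))"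

definition simple_root :: "nat \<Rightarrow> int set" where
  "simple_root k = (if k = 0 then {1} else {int k + 1, - int k})"

definition inversions :: "nat \<Rightarrow> (int \<Rightarrow> int) \<Rightarrow> int set set" where
  "inversions n w = {S \<in> roots n. positive_root S \<and> \<not> positive_root (w ` S)}"

definition inversion_count :: "nat \<Rightarrow> (int \<Rightarrow> int) \<Rightarrow> nat" where
  "inversion_count n w = card (inversions n w)"

lemma rootsE:
  assumes "S \<in> roots n"
  obtains u where "u \<in> signed_interval n" "S = {u}"
  | u v where "u \<in> signed_interval n" "v \<in> signed_interval n" "\<bar>u\<bar> \<noteq> \<bar>v\<bar>" "S = {u, v}"
  using assms unfolding roots_def by blast

lemma positive_root_singleton [simp]: "positive_root {u} \<longleftrightarrow> 0 < u"
  by (auto simp: positive_root_def)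

lemma positive_root_pair:
  "\<bar>u\<bar> \<noteq> \<bar>v\<bar> \<Longrightarrow> positive_root {u, v} \<longleftrightarrow> (if \<bar>u\<bar> < \<bar>v\<bar> then 0 < v else 0 < u)"
  by (auto simp: positive_root_def)

lemma finite_roots: "finite (roots n)"
  by (rule finite_subset[of _ "Pow (signed_interval n)"])
     (auto simp: roots_def finite_signed_interval)

lemma finite_inversions: "finite (inversions n w)"
  by (rule finite_subset[OF _ finite_roots]) (auto simp: inversions_def)

lemma inversion_count_le_card_roots: "inversion_count n w \<le> card (roots n)"
  unfolding inversion_count_def by (rule card_mono[OF finite_roots]) (auto simp: inversions_def)

lemma signed_perm_image_roots:
  assumes "signed_perm n w" "S \<in> roots n"
  shows "w ` S \<in> roots n"
  using assms(2)
proof (cases rule: rootsE)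
  case (1 u)
  then show ?thesis using signed_perm_in_signed_interval[OF assms(1)] by (auto simp: roots_def)
next
  case (2 u v)
  then have "w u \<in> signed_interval n" "w v \<in> signed_interval n" "\<bar>w u\<bar> \<noteq> \<bar>w v\<bar>"
    using signed_perm_in_signed_interval[OF assms(1)] signed_perm_abs_eq_iff[OF assms(1)] by auto
  then show ?thesis using 2(4) unfolding roots_def by blast
qed

lemma positive_root_uminus_image:
  "S \<in> roots n \<Longrightarrow> positive_root (uminus ` S) \<longleftrightarrow> \<not> positive_root S"
  by (erule rootsE) (auto simp: signed_interval_def positive_root_pair)

lemma simple_root_in_roots:
  assumes "k < n"
  shows "simple_root k \<in> roots n"
proof (cases "k = 0")
  case False
  then have "int k + 1 \<in> signed_interval n" "- int k \<in> signed_interval n"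
    using assms by (auto simp: signed_interval_def)
  then show ?thesis using False by (force simp: roots_def simple_root_def)
qed (use assms in \<open>auto simp: roots_def simple_root_def signed_interval_def\<close>)

lemma positive_simple_root: "positive_root (simple_root k)"
  by (simp add: simple_root_def positive_root_pair)

lemma gen_image_simple_root: "gen k ` simple_root k = uminus ` simple_root k"
  by (auto simp: gen_def simple_root_def tB_def sB_def)

lemma abs_sB:
  "\<bar>sB k x\<bar> = (if \<bar>x\<bar> = int k then int k + 1 else if \<bar>x\<bar> = int k + 1 then int k else \<bar>x\<bar>)"
  by (auto simp: sB_def)

lemma sB_pos_iff: "k \<noteq> 0 \<Longrightarrow> 0 < sB k x \<longleftrightarrow> 0 < x"
  by (auto simp: sB_def)

lemma positive_root_gen_image:
  assumes "S \<in> roots n" "positive_root S" "S \<noteq> simple_root k"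
  shows "positive_root (gen k ` S)"
  using assms(1)
proof (cases rule: rootsE)
  case (1 u)
  then show ?thesis using assms(2,3) by (auto simp: gen_def tB_def simple_root_def sB_pos_iff)
next
  case (2 u v)
  then have "u \<noteq> 0" "v \<noteq> 0" by (auto simp: signed_interval_def)
  moreover have "if \<bar>u\<bar> < \<bar>v\<bar> then 0 < v else 0 < u"
    using assms(2) 2 positive_root_pair by metis
  moreover have "k \<noteq> 0 \<Longrightarrow> \<not> (u = int k + 1 \<and> v = - int k \<or> u = - int k \<and> v = int k + 1)"
    using assms(3) 2 by (auto simp: simple_root_def)
  ultimately have "\<bar>gen k u\<bar> \<noteq> \<bar>gen k v\<bar> \<and>
      (if \<bar>gen k u\<bar> < \<bar>gen k v\<bar> then 0 < gen k v else 0 < gen k u)"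
    using 2(3) by (cases "k = 0") (auto simp: gen_def tB_def abs_sB sB_pos_iff split: if_splits)
  then show ?thesis using 2(4) by (simp add: positive_root_pair)
qed

lemma gen_image_gen_image [simp]: "gen k ` gen k ` S = S"
  by (simp add: image_comp)

lemma gen_image_mem_iff: "gen k ` S \<in> A \<longleftrightarrow> S \<in> (\<lambda>T. gen k ` T) ` A"
proof
  assume "gen k ` S \<in> A"
  then show "S \<in> (\<lambda>T. gen k ` T) ` A" by (rule rev_image_eqI) simp
qed auto

lemma gen_image_permutes_positive_roots:
  assumes "k < n" "S \<in> roots n" "positive_root S" "S \<noteq> simple_root k"
  shows "gen k ` S \<in> roots n \<and> positive_root (gen k ` S) \<and> gen k ` S \<noteq> simple_root k"
proof (intro conjI)
  show "gen k ` S \<in> roots n"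
    using signed_perm_image_roots[OF signed_perm_gen] assms(1,2) .
  show "positive_root (gen k ` S)"
    using positive_root_gen_image assms(2-4) .
  show "gen k ` S \<noteq> simple_root k"
  proof
    assume "gen k ` S = simple_root k"
    then have "S = uminus ` simple_root k"
      using gen_image_gen_image[of k S] by (simp add: gen_image_simple_root)
    then show False
      using assms(3) positive_root_uminus_image[OF simple_root_in_roots[OF assms(1)]]
      by (simp add: positive_simple_root)
  qed
qed

lemma card_inversions_comp_gen_minus_simple_root:
  assumes "k < n"
  shows "card (inversions n (w \<circ> gen k) - {simple_root k}) = card (inversions n w - {simple_root k})"
proof -
  let ?a = "simple_root k" and ?g = "\<lambda>S. gen k ` S"
  have "inversions n (w \<circ> gen k) - {?a} = ?g ` (inversions n w - {?a})"
  proof (rule set_eqI)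
    fix S
    have "S \<in> inversions n (w \<circ> gen k) - {?a} \<longleftrightarrow> ?g S \<in> inversions n w - {?a}"
      using gen_image_permutes_positive_roots[OF assms, of S]
        gen_image_permutes_positive_roots[OF assms, of "?g S"]
      by (auto simp: inversions_def image_comp)
    also have "\<dots> \<longleftrightarrow> S \<in> ?g ` (inversions n w - {?a})"
      by (rule gen_image_mem_iff)
    finally show "S \<in> inversions n (w \<circ> gen k) - {?a} \<longleftrightarrow> S \<in> ?g ` (inversions n w - {?a})" .
  qed
  moreover have "inj ?g"
    by (rule inj_on_inverseI[where g = ?g]) simp
  ultimately show ?thesis
    by (simp add: card_image inj_on_subset)
qed

lemma simple_root_in_inversions_iff:
  "k < n \<Longrightarrow> simple_root k \<in> inversions n w \<longleftrightarrow> \<not> positive_root (w ` simple_root k)"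
  by (simp add: inversions_def simple_root_in_roots positive_simple_root)

lemma simple_root_in_inversions_comp_gen_iff:
  assumes "signed_perm n w" "k < n"
  shows "simple_root k \<in> inversions n (w \<circ> gen k) \<longleftrightarrow> positive_root (w ` simple_root k)"
proof -
  have "(w \<circ> gen k) ` simple_root k = w ` gen k ` simple_root k"
    by (rule image_comp[symmetric])
  also have "\<dots> = w ` uminus ` simple_root k"
    by (simp only: gen_image_simple_root)
  also have "\<dots> = uminus ` w ` simple_root k"
    by (simp add: image_image signed_perm_uminus[OF assms(1)])
  finally show ?thesis
    using positive_root_uminus_image
      signed_perm_image_roots[OF assms(1) simple_root_in_roots[OF assms(2)]]
    by (simp add: inversions_def simple_root_in_roots[OF assms(2)] positive_simple_root)
qed

lemma card_eq_Suc_if_Diff_eq: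
  assumes "finite A" "a \<in> A" "a \<notin> B" "card (A - {a}) = card (B - {a})"
  shows "card A = Suc (card B)"
  using card_Suc_Diff1[OF assms(1,2)] assms(3,4) by simp

lemma inversion_count_comp_gen_ascent:
  assumes "signed_perm n w" "k < n" "positive_root (w ` simple_root k)"
  shows "inversion_count n (w \<circ> gen k) = Suc (inversion_count n w)"
  unfolding inversion_count_def
proof (rule card_eq_Suc_if_Diff_eq[OF finite_inversions])
  show "simple_root k \<in> inversions n (w \<circ> gen k)"
    using simple_root_in_inversions_comp_gen_iff[OF assms(1,2)] assms(3) by simp
  show "simple_root k \<notin> inversions n w"
    using simple_root_in_inversions_iff[OF assms(2)] assms(3) by simp
qed (rule card_inversions_comp_gen_minus_simple_root[OF assms(2)])

lemma inversion_count_comp_gen_descent: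
  assumes "signed_perm n w" "k < n" "\<not> positive_root (w ` simple_root k)"
  shows "inversion_count n w = Suc (inversion_count n (w \<circ> gen k))"
  unfolding inversion_count_def
proof (rule card_eq_Suc_if_Diff_eq[OF finite_inversions])
  show "simple_root k \<in> inversions n w"
    using simple_root_in_inversions_iff[OF assms(2)] assms(3) by simp
  show "simple_root k \<notin> inversions n (w \<circ> gen k)"
    using simple_root_in_inversions_comp_gen_iff[OF assms(1,2)] assms(3) by simp
qed (rule card_inversions_comp_gen_minus_simple_root[OF assms(2), symmetric])

section \<open>Length equals the number of inversions\<close>

lemma inversion_count_comp_gen_le:
  assumes "signed_perm n w" "k < n"
  shows "inversion_count n (w \<circ> gen k) \<le> Suc (inversion_count n w)"
  using inversion_count_comp_gen_ascent[OF assms] inversion_count_comp_gen_descent[OF assms]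
  by (cases "positive_root (w ` simple_root k)") auto

lemma inversion_count_id [simp]: "inversion_count n id = 0"
  by (simp add: inversion_count_def inversions_def)

lemma inversion_count_evalw_le: "set ws \<subseteq> {0..<n} \<Longrightarrow> inversion_count n (evalw ws) \<le> length ws"
proof (induction ws rule: rev_induct)
  case (snoc k ws)
  then have "inversion_count n (evalw ws \<circ> gen k) \<le> Suc (inversion_count n (evalw ws))"
    and "inversion_count n (evalw ws) \<le> length ws"
    by (auto intro: inversion_count_comp_gen_le signed_perm_evalw)
  moreover have "evalw (ws @ [k]) = evalw ws \<circ> gen k"
    by (simp add: evalw_append)
  ultimately show ?case
    by (simp only: length_append_singleton)
qed simp

lemma positive_root_image_simple_root_iff:
  assumes "signed_perm n w"
  shows "positive_root (w ` simple_root k) \<longleftrightarrow> (if k = 0 then 0 < w 1 else w (int k) < w (int k + 1))"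
proof (cases "k = 0")
  case False
  have "\<bar>w (int k + 1)\<bar> \<noteq> \<bar>- w (int k)\<bar>"
    using signed_perm_abs_eq_iff[OF assms, of "int k + 1" "int k"] by simp
  then show ?thesis
    using False by (auto simp: simple_root_def signed_perm_uminus[OF assms] positive_root_pair abs_if)
qed (simp add: simple_root_def)

lemma increasing_self_map_of_interval_eq:
  fixes f :: "int \<Rightarrow> int"
  assumes increasing: "\<And>x. a \<le> x \<Longrightarrow> x < b \<Longrightarrow> f x < f (x + 1)"
    and maps_to: "\<And>x. a \<le> x \<Longrightarrow> x \<le> b \<Longrightarrow> a \<le> f x \<and> f x \<le> b"
    and "a \<le> x" "x \<le> b"
  shows "f x = x"
proof -
  have lower: "a + int j \<le> f (a + int j)" if "a + int j \<le> b" for j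
    using that
  proof (induction j)
    case (Suc j)
    then have "a + int j \<le> f (a + int j)" by simp
    moreover have "f (a + int j) < f (a + int (Suc j))"
      using increasing[of "a + int j"] Suc.prems by (simp add: algebra_simps)
    ultimately show ?case by simp
  qed (use maps_to in auto)
  have upper: "f (b - int j) \<le> b - int j" if "a \<le> b - int j" for j
    using that
  proof (induction j)
    case (Suc j)
    then have "f (b - int j) \<le> b - int j" by simp
    moreover have "f (b - int (Suc j)) < f (b - int j)"
      using increasing[of "b - int (Suc j)"] Suc.prems by simp
    ultimately show ?case by simp
  qed (use maps_to in auto)
  show ?thesis
    using lower[of "nat (x - a)"] upper[of "nat (b - x)"] assms(3,4) by simp
qed

lemma signed_perm_without_descents_eq_id:
  assumes w: "signed_perm n w" and no_descent: "\<And>k. k < n \<Longrightarrow> positive_root (w ` simple_root k)"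
  shows "w = id"
proof -
  have ascent: "w (int k) < w (int k + 1)" if "1 \<le> k" "k < n" for k
    using no_descent[OF that(2)] that(1) by (simp add: positive_root_image_simple_root_iff[OF w])
  have increasing: "w x < w (x + 1)" if "- int n \<le> x" "x < int n" for x
  proof -
    consider "1 \<le> x" | "x = 0" | "x = -1" | "x \<le> -2" by linarith
    then show ?thesis
    proof cases
      case 1
      then show ?thesis using ascent[of "nat x"] that by simp
    next
      case 2
      then show ?thesis
        using no_descent[of 0] that signed_perm_zero[OF w]
        by (simp add: positive_root_image_simple_root_iff[OF w])
    next
      case 3
      then show ?thesis
        using no_descent[of 0] that signed_perm_zero[OF w] signed_perm_uminus[OF w, of 1]
        by (simp add: positive_root_image_simple_root_iff[OF w])
    next
      case 4
      then have "w (- x - 1) < w (- x)"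
        using ascent[of "nat (- x - 1)"] that by simp
      moreover have "w (- x - 1) = - w (x + 1)"
        using signed_perm_uminus[OF w, of "x + 1"] by simp
      ultimately show ?thesis by (simp add: signed_perm_uminus[OF w])
    qed
  qed
  have maps_to: "- int n \<le> w x \<and> w x \<le> int n" if "- int n \<le> x" "x \<le> int n" for x
    using that signed_perm_in_signed_interval[OF w, of x] signed_perm_zero[OF w]
    by (cases "x = 0") (auto simp: signed_interval_def abs_le_iff)
  show ?thesis
  proof
    fix x
    show "w x = id x"
    proof (cases "\<bar>x\<bar> \<le> int n")
      case True
      then show ?thesis
        using increasing_self_map_of_interval_eq[of "- int n" "int n" w, OF increasing maps_to]
        by (simp add: abs_le_iff)
    next
      case False
      then show ?thesis using signed_perm_outside[OF w] by (simp add: signed_interval_def)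
    qed
  qed
qed

lemma signed_perm_word_of_inversion_count:
  "signed_perm n w \<Longrightarrow>
     \<exists>ws. set ws \<subseteq> {0..<n} \<and> length ws = inversion_count n w \<and> evalw ws = w"
proof (induction "inversion_count n w" arbitrary: w rule: less_induct)
  case less
  show ?case
  proof (cases "\<forall>k<n. positive_root (w ` simple_root k)")
    case True
    then have "w = id" using signed_perm_without_descents_eq_id less.prems by blast
    then show ?thesis by (intro exI[of _ "[]"]) simp
  next
    case False
    then obtain k where k: "k < n" "\<not> positive_root (w ` simple_root k)" by blast
    note shorter = inversion_count_comp_gen_descent[OF less.prems k]
    obtain ws where ws: "set ws \<subseteq> {0..<n}" "length ws = inversion_count n (w \<circ> gen k)"
      "evalw ws = w \<circ> gen k"
      using less.hyps[of "w \<circ> gen k"] shorter signed_perm_comp[OF less.prems signed_perm_gen[OF k(1)]]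
      by auto
    have "evalw (ws @ [k]) = w"
      using ws(3) by (simp add: evalw_append comp_assoc)
    then show ?thesis
      using ws k shorter by (intro exI[of _ "ws @ [k]"]) simp
  qed
qed

lemma lenB_eq_inversion_count:
  assumes "signed_perm n w"
  shows "lenB n w = inversion_count n w"
  unfolding lenB_def
proof (rule Least_equality)
  show "\<exists>ws. length ws = inversion_count n w \<and> set ws \<subseteq> {0..<n} \<and> evalw ws = w"
    using signed_perm_word_of_inversion_count[OF assms] by blast
qed (use inversion_count_evalw_le in blast)

section \<open>Left multiplication by t\<close>

lemma positive_root_tB_image:
  assumes "S \<in> roots n" "S \<noteq> {1}" "S \<noteq> {-1}"
  shows "positive_root (tB ` S) \<longleftrightarrow> positive_root S"
  using assms(1)
proof (cases rule: rootsE)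
  case (2 u v)
  then have "u \<noteq> 0" "v \<noteq> 0" by (auto simp: signed_interval_def)
  with 2(3) have "\<bar>tB u\<bar> \<noteq> \<bar>tB v\<bar>"
    "(if \<bar>tB u\<bar> < \<bar>tB v\<bar> then 0 < tB v else 0 < tB u) \<longleftrightarrow>
     (if \<bar>u\<bar> < \<bar>v\<bar> then 0 < v else 0 < u)"
    by (auto simp: tB_def)
  with 2(3,4) show ?thesis
    by (simp add: positive_root_pair)
qed (use assms in \<open>auto simp: tB_def\<close>)

lemma inversion_count_tB_comp_less_iff:
  assumes w: "signed_perm n w" and "0 < n" and p: "w p = 1"
  shows "inversion_count n w < inversion_count n (tB \<circ> w) \<longleftrightarrow> 0 < p"
proof -
  define R where "R = {\<bar>p\<bar>}"
  have "p \<in> signed_interval n"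
  proof (rule ccontr)
    assume "p \<notin> signed_interval n"
    moreover from this have "p = 1" using signed_perm_outside[OF w] p by simp
    ultimately show False using \<open>0 < n\<close> by (simp add: signed_interval_def)
  qed
  then have R: "R \<in> roots n" "positive_root R"
    by (auto simp: R_def roots_def signed_interval_def)
  have w_R: "w ` R = (if 0 < p then {1} else {-1})"
    using p signed_perm_uminus[OF w, of p] by (auto simp: R_def abs_if)
  have "S \<in> inversions n (tB \<circ> w) \<longleftrightarrow> S \<in> inversions n w" if "S \<noteq> R" for S
  proof (cases "S \<in> roots n \<and> positive_root S")
    case True
    have "S \<noteq> {p}" "S \<noteq> {-p}"
      using True that by (auto simp: R_def)
    then have "w ` S \<noteq> w ` {p}" "w ` S \<noteq> w ` {-p}"
      by (simp_all only: signed_perm_image_eq_iff[OF w] not_False_eq_True)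
    then have "w ` S \<noteq> {1}" "w ` S \<noteq> {-1}"
      using p signed_perm_uminus[OF w, of p] by auto
    then have "positive_root (tB ` w ` S) \<longleftrightarrow> positive_root (w ` S)"
      using True positive_root_tB_image[OF signed_perm_image_roots[OF w]] by blast
    then show ?thesis
      by (simp add: inversions_def image_comp)
  qed (auto simp: inversions_def)
  then have "inversions n (tB \<circ> w) - {R} = inversions n w - {R}"
    by blast
  then have same: "card (inversions n (tB \<circ> w) - {R}) = card (inversions n w - {R})"
    by (rule arg_cong)
  have "(tB \<circ> w) ` R = tB ` w ` R"
    by (rule image_comp[symmetric])
  also have "\<dots> = (if 0 < p then {-1} else {1})"
    by (simp add: w_R tB_def)
  finally have R_tB_w: "R \<in> inversions n (tB \<circ> w) \<longleftrightarrow> 0 < p"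
    using R by (simp add: inversions_def)
  have R_w: "R \<in> inversions n w \<longleftrightarrow> \<not> 0 < p"
    using R w_R by (simp add: inversions_def)
  show ?thesis
  proof (cases "0 < p")
    case True
    have "inversion_count n (tB \<circ> w) = Suc (inversion_count n w)"
      unfolding inversion_count_def
      by (rule card_eq_Suc_if_Diff_eq[OF finite_inversions _ _ same])
         (use True R_tB_w R_w in simp_all)
    then show ?thesis using True by simp
  next
    case False
    have "inversion_count n w = Suc (inversion_count n (tB \<circ> w))"
      unfolding inversion_count_def
      by (rule card_eq_Suc_if_Diff_eq[OF finite_inversions _ _ same[symmetric]])
         (use False R_tB_w R_w in simp_all)
    then show ?thesis using False by simp
  qed
qed

section \<open>The factors of alpha\<close>

lemma evalw_fixes_below:
  assumes "1 \<le> l" "set ws \<subseteq> {l..}" "1 \<le> x" "x < int l"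
  shows "evalw ws x = x"
  using assms(2)
proof (induction ws)
  case (Cons k ws)
  then show ?case using assms(1,3,4) by (auto simp: gen_def sB_def)
qed simp

lemma evalw_maps_interval:
  assumes "1 \<le> l" "set ws \<subseteq> {l..<n}" "int l \<le> x" "x \<le> int n"
  shows "int l \<le> evalw ws x \<and> evalw ws x \<le> int n"
  using assms(2)
proof (induction ws)
  case (Cons k ws)
  then show ?case using assms(1) by (auto simp: gen_def sB_def)
qed (use assms in simp)

lemma parB_signed_perm: "v \<in> parB i j \<Longrightarrow> j \<le> n \<Longrightarrow> signed_perm n v"
  by (auto simp: parB_def intro!: signed_perm_evalw)

lemma sigmaB_longest:
  assumes "j \<le> n"
  shows "sigmaB n i j \<in> parB i j \<and> (\<forall>v\<in>parB i j. lenB n v \<le> lenB n (sigmaB n i j))"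
proof -
  let ?L = "lenB n ` parB i j"
  have "?L \<subseteq> {..card (roots n)}"
    using assms parB_signed_perm lenB_eq_inversion_count inversion_count_le_card_roots by fastforce
  then have "finite ?L" by (rule finite_subset) simp
  moreover have "id \<in> parB i j"
    by (auto simp: parB_def intro!: exI[of _ "[]"])
  ultimately obtain s where "s \<in> parB i j" "lenB n s = Max ?L"
    using Max_in[of ?L] by fastforce
  then have "\<exists>s. s \<in> parB i j \<and> (\<forall>v\<in>parB i j. lenB n v \<le> lenB n s)"
    using Max_ge[OF \<open>finite ?L\<close>] by auto
  then show ?thesis
    unfolding sigmaB_def by (rule someI_ex)
qed

lemma sigmaB_fixes_below:
  assumes "1 \<le> l" "1 \<le> x" "x < int l"
  shows "sigmaB n l n x = x"
proof -
  obtain ws where ws: "set ws \<subseteq> {l..<n}" "sigmaB n l n = evalw ws"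
    using sigmaB_longest[of n n l] by (auto simp: parB_def)
  then have "set ws \<subseteq> {l..}" by auto
  then show ?thesis
    using evalw_fixes_below[OF assms(1) _ assms(2,3)] ws(2) by simp
qed

lemma sigmaB_reverses:
  assumes "1 \<le> l" "int l \<le> x" "x \<le> int n"
  shows "sigmaB n l n x = int n + int l - x"
proof -
  define s where "s = sigmaB n l n"
  obtain ws where ws: "set ws \<subseteq> {l..<n}" "s = evalw ws"
    using sigmaB_longest[of n n l] by (auto simp: parB_def s_def)
  have longest: "lenB n v \<le> lenB n s" if "v \<in> parB l n" for v
    using sigmaB_longest[of n n l] that by (simp add: s_def)
  have s: "signed_perm n s"
    using parB_signed_perm[OF conjunct1[OF sigmaB_longest] order_refl] by (simp add: s_def)
  have decreasing: "s (i + 1) < s i" if "int l \<le> i" "i < int n" for i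
  proof (rule ccontr)
    assume "\<not> s (i + 1) < s i"
    then have "positive_root (s ` simple_root (nat i))"
      using that assms(1) signed_perm_eq_iff[OF s, of "i + 1" i]
      by (auto simp: positive_root_image_simple_root_iff[OF s])
    then have "lenB n (s \<circ> gen (nat i)) = Suc (lenB n s)"
      using that inversion_count_comp_gen_ascent[OF s] lenB_eq_inversion_count[OF s]
        lenB_eq_inversion_count[OF signed_perm_comp[OF s signed_perm_gen]]
      by simp
    moreover have "set (ws @ [nat i]) \<subseteq> {l..<n}"
      using ws(1) that by auto
    then have "evalw (ws @ [nat i]) \<in> parB l n"
      unfolding parB_def by blast
    then have "s \<circ> gen (nat i) \<in> parB l n"
      using ws(2) by (simp add: evalw_append)
    ultimately show False
      using longest by fastforce
  qed
  have "int n + int l - s x = x"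
  proof (rule increasing_self_map_of_interval_eq[of "int l" "int n"])
    show "int n + int l - s y < int n + int l - s (y + 1)" if "int l \<le> y" "y < int n" for y
      using decreasing[OF that] by simp
    show "int l \<le> int n + int l - s y \<and> int n + int l - s y \<le> int n"
      if "int l \<le> y" "y \<le> int n" for y
      using evalw_maps_interval[OF assms(1) ws(1) that] ws(2) by simp
  qed (use assms in auto)
  then show ?thesis by (simp add: s_def)
qed

lemma signed_perm_tB: "0 < n \<Longrightarrow> signed_perm n tB"
  using signed_perm_gen[of 0 n] by (simp add: gen_def)

lemma signed_perm_rB: "i \<le> n \<Longrightarrow> signed_perm n (rB i)"
proof (induction i rule: rB.induct)
  case (3 i)
  then have "signed_perm n (sB (Suc i))"
    using signed_perm_gen[of "Suc i" n] by (simp add: gen_def)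
  with 3 show ?case
    unfolding rB.simps by (intro signed_perm_comp) simp_all
qed (simp_all add: signed_perm_id signed_perm_tB)

lemma signed_perm_aB: "l \<le> n \<Longrightarrow> signed_perm n (aB l)"
proof (induction l)
  case (Suc l)
  then show ?case
    unfolding aB.simps by (intro signed_perm_comp signed_perm_rB) simp_all
qed (simp add: signed_perm_id)

lemma signed_perm_cB: "J \<subseteq> {0..<n} \<Longrightarrow> signed_perm n (cB J)"
  unfolding cB_def by (rule signed_perm_evalw) (simp add: finite_subset)

lemma rB_uminus: "rB i (- x) = - rB i x"
  by (induction i arbitrary: x rule: rB.induct) (auto simp: tB_def sB_def)

lemma aB_uminus: "aB l (- x) = - aB l x"
  by (induction l arbitrary: x) (simp_all add: rB_uminus)

lemma rB_above: "int i < x \<Longrightarrow> rB i x = x"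
  by (induction i rule: rB.induct) (auto simp: tB_def sB_def)

lemma rB_one: "1 \<le> i \<Longrightarrow> rB i 1 = - int i"
  by (induction i rule: rB.induct) (auto simp: tB_def sB_def)

lemma rB_shift: "2 \<le> x \<Longrightarrow> x \<le> int i \<Longrightarrow> rB i x = x - 1"
proof (induction i rule: rB.induct)
  case (3 i)
  then show ?case
    using rB_above[of "Suc i" x] by (cases "x \<le> int (Suc i)") (auto simp: sB_def)
qed (auto simp: tB_def)

lemma aB_above: "int l < x \<Longrightarrow> aB l x = x"
  by (induction l) (simp_all add: rB_above)

lemma aB_reverses: "1 \<le> m \<Longrightarrow> m \<le> int l \<Longrightarrow> aB l m = m - int l - 1"
proof (induction l arbitrary: m)
  case (Suc l)
  show ?case
  proof (cases "m = 1")
    case True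
    have "rB (Suc l) 1 = - (int l + 1)"
      using rB_one[of "Suc l"] by simp
    then have "aB (Suc l) 1 = aB l (- (int l + 1))"
      by simp
    also have "\<dots> = - aB l (int l + 1)"
      by (rule aB_uminus)
    also have "\<dots> = - (int l + 1)"
      using aB_above[of l "int l + 1"] by simp
    finally show ?thesis using True by simp
  next
    case False
    then show ?thesis
      using Suc rB_shift[of m "Suc l"] by simp
  qed
qed simp

lemma evalw_sorted_run:
  assumes "sorted_wrt (<) xs" "set xs \<inter> {..m} = {a..<m}" "1 \<le> a" "a \<le> m"
  shows "evalw xs (int m) = int a"
  using assms
proof (induction xs arbitrary: a)
  case Nil
  then show ?case by (cases "a < m") auto
next
  case (Cons x xs)
  have sorted: "sorted_wrt (<) xs" "\<And>y. y \<in> set xs \<Longrightarrow> x < y"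
    using Cons.prems(1) by auto
  have run: "y \<in> set (x # xs) \<and> y \<le> m \<longleftrightarrow> a \<le> y \<and> y < m" for y
  proof -
    have "y \<in> set (x # xs) \<inter> {..m} \<longleftrightarrow> y \<in> {a..<m}"
      by (simp only: Cons.prems(2))
    then show ?thesis by simp
  qed
  show ?case
  proof (cases "x \<le> m")
    case True
    then have x: "a \<le> x" "x < m" using run[of x] by simp_all
    then have "a \<in> set (x # xs)" using run[of a] by simp
    then have "x = a" using sorted(2)[of a] x by auto
    have "set xs \<inter> {..m} = {a + 1..<m}"
    proof (rule set_eqI)
      fix y
      show "y \<in> set xs \<inter> {..m} \<longleftrightarrow> y \<in> {a + 1..<m}"
        using run[of y] sorted(2)[of y] \<open>x = a\<close> by auto
    qed
    then have "evalw xs (int m) = int a + 1"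
      using Cons.IH[OF sorted(1)] x \<open>x = a\<close> by simp
    then show ?thesis using \<open>x = a\<close> Cons.prems(3) by (simp add: gen_def sB_def)
  next
    case False
    have "a = m"
    proof (rule ccontr)
      assume "a \<noteq> m"
      then have "a \<in> set (x # xs)" using run[of a] Cons.prems(4) by simp
      then show False using sorted(2)[of a] False Cons.prems(4) by auto
    qed
    have "set xs \<inter> {..m} = {}"
      using sorted(2) False by fastforce
    then have "evalw xs (int m) = int m"
      using Cons.IH[OF sorted(1)] Cons.prems(3) \<open>a = m\<close> by simp
    then show ?thesis using False \<open>a = m\<close> Cons.prems(3) by (simp add: gen_def sB_def)
  qed
qed

lemma cB_run:
  assumes "finite J" "J \<inter> {..m} = {a..<m}" "1 \<le> a" "a \<le> m"
  shows "cB J (int m) = int a"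
  unfolding cB_def using assms by (intro evalw_sorted_run) auto

lemma alphaB_apply:
  "alphaB n l I x = cB (I \<inter> {1..l-1}) (cB ({l..n-1} - I) (sigmaB n l n (aB l x)))"
proof -
  have "{l..n-1} - (I \<inter> {l..n-1}) = {l..n-1} - I" by blast
  then show ?thesis by (simp add: alphaB_def)
qed

lemma alphaB_gap_below:
  assumes "m \<in> {1..l-1}" "m \<notin> I" "{1..<m} \<subseteq> I"
  shows "alphaB n l I (int m - int l - 1) = 1"
proof -
  have "int m - int l - 1 = - (int l + 1 - int m)" by simp
  then have "aB l (int m - int l - 1) = - aB l (int l + 1 - int m)"
    by (simp only: aB_uminus)
  also have "\<dots> = int m"
    using assms(1) aB_reverses[of "int l + 1 - int m" l] by auto
  finally have a: "aB l (int m - int l - 1) = int m" .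
  have s: "sigmaB n l n (int m) = int m"
    using assms(1) by (intro sigmaB_fixes_below) auto
  have c2: "cB ({l..n-1} - I) (int m) = int m"
    using assms(1) by (intro cB_run) auto
  have c1: "cB (I \<inter> {1..l-1}) (int m) = int 1"
    using assms by (intro cB_run) (auto simp: subset_iff le_less)
  show ?thesis
    unfolding alphaB_apply a s c2 c1 by simp
qed

lemma alphaB_first_above:
  assumes "1 \<le> l" "I \<subseteq> {1..n-1}" "{1..l-1} \<subseteq> I"
    and "q \<in> I" "l \<le> q" "\<And>j. j \<in> I \<Longrightarrow> l \<le> j \<Longrightarrow> q \<le> j"
  shows "alphaB n l I (int n + int l - int q) = 1"
proof -
  have "q < n" using subsetD[OF assms(2,4)] by auto
  then have a: "aB l (int n + int l - int q) = int n + int l - int q"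
    by (intro aB_above) simp
  have s: "sigmaB n l n (int n + int l - int q) = int q"
    using assms(1,5) \<open>q < n\<close> by (subst sigmaB_reverses) auto
  have "({l..n-1} - I) \<inter> {..q} = {l..<q}"
    using assms(4-6) \<open>q < n\<close> by (auto simp: not_le[symmetric])
  then have c2: "cB ({l..n-1} - I) (int q) = int l"
    using assms(1,5) by (intro cB_run) auto
  have "I \<inter> {1..l-1} \<inter> {..l} = {1..<l}"
    using assms(1,3) by (auto simp: subset_iff)
  then have c1: "cB (I \<inter> {1..l-1}) (int l) = int 1"
    using assms(1) by (intro cB_run) auto
  show ?thesis
    unfolding alphaB_apply a s c2 c1 by simp
qed

lemma alphaB_no_gap:
  assumes "1 \<le> l" "l < n" "{1..l-1} \<subseteq> I" "I \<inter> {l..n-1} = {}"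
  shows "alphaB n l I (-1) = 1"
proof -
  have a: "aB l (-1) = int l"
    using aB_uminus[of l 1] aB_reverses[of 1 l] assms(1) by simp
  have s: "sigmaB n l n (int l) = int n"
    using assms(1,2) by (subst sigmaB_reverses) auto
  have "({l..n-1} - I) \<inter> {..n} = {l..<n}"
    using assms(2,4) by (fastforce simp: disjoint_iff)
  then have c2: "cB ({l..n-1} - I) (int n) = int l"
    using assms(1,2) by (intro cB_run) auto
  have "I \<inter> {1..l-1} \<inter> {..l} = {1..<l}"
    using assms(1,3) by (auto simp: subset_iff)
  then have c1: "cB (I \<inter> {1..l-1}) (int l) = int 1"
    using assms(1) by (intro cB_run) auto
  show ?thesis
    unfolding alphaB_apply a s c2 c1 by simp
qed

lemma alphaB_preimage_one:
  assumes "1 \<le> l" "l < n" "I \<subseteq> {1..n-1}"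
  shows "\<exists>p. alphaB n l I p = 1 \<and> (0 < p \<longleftrightarrow> {1..l-1} \<subset> I)"
proof (cases "{1..l-1} \<subseteq> I")
  case False
  then obtain m where m: "m \<in> {1..l-1}" "m \<notin> I"
    and least: "\<And>j. j < m \<Longrightarrow> \<not> (j \<in> {1..l-1} \<and> j \<notin> I)"
    using exists_least_iff[of "\<lambda>m. m \<in> {1..l-1} \<and> m \<notin> I"] by blast
  have "{1..<m} \<subseteq> I"
    using least m(1) by fastforce
  then have "alphaB n l I (int m - int l - 1) = 1"
    using alphaB_gap_below m by blast
  moreover have "\<not> 0 < int m - int l - 1"
    using m(1) by auto
  ultimately show ?thesis
    using False by blast
next
  case lower: True
  show ?thesis
  proof (cases "\<exists>j\<in>I. l \<le> j")
    case True
    then obtain q where q: "q \<in> I" "l \<le> q" and least: "\<And>j. j < q \<Longrightarrow> \<not> (j \<in> I \<and> l \<le> j)"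
      using exists_least_iff[of "\<lambda>j. j \<in> I \<and> l \<le> j"] by blast
    have "alphaB n l I (int n + int l - int q) = 1"
      using assms(1,3) lower q least by (intro alphaB_first_above) (auto simp: not_less[symmetric])
    moreover have "q < n"
      using subsetD[OF assms(3) q(1)] by auto
    moreover have "{1..l-1} \<subset> I"
      using lower q by auto
    ultimately show ?thesis
      by (intro exI[of _ "int n + int l - int q"]) simp
  next
    case False
    then have "I \<inter> {l..n-1} = {}" by auto
    then have "alphaB n l I (-1) = 1"
      using alphaB_no_gap assms(1,2) lower by blast
    moreover have "I \<subseteq> {1..l-1}"
      using False assms(3) by fastforce
    ultimately show ?thesis
      by (intro exI[of _ "-1"]) auto
  qed
qed

lemma signed_perm_alphaB:
  assumes "l < n"
  shows "signed_perm n (alphaB n l I)"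
  unfolding alphaB_def
proof (intro signed_perm_comp)
  show "signed_perm n (cB (I \<inter> {1..l-1}))" "signed_perm n (cB ({l..n-1} - I \<inter> {l..n-1}))"
    using assms by (auto intro!: signed_perm_cB)
  show "signed_perm n (sigmaB n l n)"
    using parB_signed_perm[OF conjunct1[OF sigmaB_longest]] by simp
  show "signed_perm n (aB l)"
    using assms by (simp add: signed_perm_aB)
qed

theorem lemma3p2:
  fixes n l :: nat and I :: "nat set"
  assumes "1 \<le> l" and "l \<le> n - 1" and "I \<subseteq> {1..n-1}"
  shows "lenB n (tB \<circ> alphaB n l I) > lenB n (alphaB n l I) \<longleftrightarrow> {1..l-1} \<subset> I"
proof -
  have "l < n" "0 < n" using assms(1,2) by auto
  obtain p where p: "alphaB n l I p = 1" "0 < p \<longleftrightarrow> {1..l-1} \<subset> I"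
    using alphaB_preimage_one[OF assms(1) \<open>l < n\<close> assms(3)] by blast
  have w: "signed_perm n (alphaB n l I)"
    using signed_perm_alphaB[OF \<open>l < n\<close>] .
  have tw: "signed_perm n (tB \<circ> alphaB n l I)"
    using signed_perm_comp[OF signed_perm_tB[OF \<open>0 < n\<close>] w] .
  show ?thesis
    using inversion_count_tB_comp_less_iff[OF w \<open>0 < n\<close> p(1)] p(2)
    by (simp add: lenB_eq_inversion_count[OF w] lenB_eq_inversion_count[OF tw])
qed

end
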